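(* Let $k\geq 3$ and let $G$ be a diregular $(2,k,+3)$-digraph. Let $u,v$ be distinct vertices with exactly one common out-neighbour $u_2$, and write $N^+(u)=\{u_1,u_2\}$, $N^+(v)=\{v_1,u_2\}$. Then $v_1\in O(u)$ or $u_1\in O(v)$.
   Context: A digraph is $k$-geodetic if for every ordered pair of vertices $x,y$ there is at most one directed path from $x$ to $y$ of length at most $k$ (the trivial path counts). A diregular $(2,k,+3)$-digraph is a $k$-geodetic digraph of order $1+2+\dots+2^k+3$ in which every vertex has in- and out-degree $2$. $N^+(x)$ is the set of out-neighbours of $x$. $d(x,y)$ is the directed distance; $O(x)=\{y: d(x,y)\geq k+1\}$ is the outlier set of $x$. *)

theory Defs
  imports Main
begin

text \<open>A digraph is given by a vertex set V and an arc relation A with A \<subseteq> V \<times> V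
  (no multiple arcs). Walks are nonempty vertex lists with consecutive pairs in A.\<close>

definition out_nbrs :: "('a \<times> 'a) set \<Rightarrow> 'a \<Rightarrow> 'a set" where
  "out_nbrs A x = {y. (x, y) \<in> A}"

definition in_nbrs :: "('a \<times> 'a) set \<Rightarrow> 'a \<Rightarrow> 'a set" where
  "in_nbrs A x = {y. (y, x) \<in> A}"

definition is_walk :: "('a \<times> 'a) set \<Rightarrow> 'a list \<Rightarrow> bool" where
  "is_walk A p \<longleftrightarrow> p \<noteq> [] \<and> (\<forall>i. Suc i < length p \<longrightarrow> (p ! i, p ! Suc i) \<in> A)"

definition walk_len :: "'a list \<Rightarrow> nat" where
  "walk_len p = length p - 1"

definition k_geodetic :: "'a set \<Rightarrow> ('a \<times> 'a) set \<Rightarrow> nat \<Rightarrow> bool" where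
  "k_geodetic V A k \<longleftrightarrow>
     (\<forall>x\<in>V. \<forall>y\<in>V. \<forall>p q. is_walk A p \<and> is_walk A q \<and>
        hd p = x \<and> last p = y \<and> hd q = x \<and> last q = y \<and>
        walk_len p \<le> k \<and> walk_len q \<le> k \<longrightarrow> p = q)"

definition diregular_2k3 :: "'a set \<Rightarrow> ('a \<times> 'a) set \<Rightarrow> nat \<Rightarrow> bool" where
  "diregular_2k3 V A k \<longleftrightarrow>
     finite V \<and> A \<subseteq> V \<times> V \<and> k_geodetic V A k \<and>
     card V = (\<Sum>i\<le>k. 2 ^ i) + 3 \<and>
     (\<forall>x\<in>V. card (out_nbrs A x) = 2 \<and> card (in_nbrs A x) = 2)"

text \<open>Outlier set: vertices at distance at least k+1 (including unreachable ones),
  i.e. not reachable by a walk of length at most k.\<close>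
definition outliers :: "'a set \<Rightarrow> ('a \<times> 'a) set \<Rightarrow> nat \<Rightarrow> 'a \<Rightarrow> 'a set" where
  "outliers V A k x = {y\<in>V. \<not> (\<exists>p. is_walk A p \<and> hd p = x \<and> last p = y \<and> walk_len p \<le> k)}"

end

theory Submission
  imports Defs
begin

text \<open>Suppose both conclusions fail, i.e. d(u, v1) <= k and d(v, u1) <= k. By
  k-geodecity a walk of length at most k from u to v1 cannot start with the arc to u2 (it would
  give a second short walk from v to v1), so it starts with u1; hence d(u1, v1) = a < k and
  symmetrically d(v1, u1) = b < k, and a + b > k since there are no short cycles.
  Every vertex at distance less than k from u1 but not from v1 is then an outlier of v, and so
  is u. There are at least three such vertices: the sibling of v1 on the geodesic from u1 to v1,
  and the two out-neighbours of a vertex at distance k - b - 1 from u1, whose distance from v1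
  is forced to be k. So v would have four outliers, whereas counting the 2^0 + ... + 2^k
  walks of length at most k from a vertex, which end in distinct vertices, shows that every
  vertex of a diregular (2,k,+3)-digraph has exactly three.\<close>

lemma not_is_walk_Nil [simp]: "\<not> is_walk A []"
  by (simp add: is_walk_def)

lemma is_walk_Cons:
  "is_walk A (x # p) \<longleftrightarrow> p = [] \<or> (x, hd p) \<in> A \<and> is_walk A p"
  by (auto simp: is_walk_def nth_Cons hd_conv_nth split: nat.splits)

lemma walk_len_Cons: "p \<noteq> [] \<Longrightarrow> walk_len (x # p) = Suc (walk_len p)"
  by (simp add: walk_len_def)

lemma walk_imp_relpow: "is_walk A p \<Longrightarrow> (hd p, last p) \<in> A ^^ walk_len p"
proof (induction p)
  case (Cons x q)
  show ?case
  proof (cases "q = []")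
    case True
    then show ?thesis by (simp add: walk_len_def)
  next
    case False
    with Cons have "(x, hd q) \<in> A" "(hd q, last q) \<in> A ^^ walk_len q"
      by (simp_all add: is_walk_Cons)
    with False show ?thesis
      by (simp add: walk_len_Cons del: relpow.simps) (rule relpow_Suc_I2)
  qed
qed simp

lemma relpow_imp_walk:
  "(x, y) \<in> A ^^ n \<Longrightarrow> \<exists>p. is_walk A p \<and> hd p = x \<and> last p = y \<and> walk_len p = n"
proof (induction n arbitrary: x)
  case 0
  then show ?case
    by (intro exI[of _ "[x]"]) (simp add: is_walk_def walk_len_def)
next
  case (Suc n)
  then obtain z where z: "(x, z) \<in> A" "(z, y) \<in> A ^^ n"
    by (blast dest: relpow_Suc_D2)
  with Suc.IH obtain q where q: "is_walk A q" "hd q = z" "last q = y" "walk_len q = n"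
    by blast
  then have "q \<noteq> []"
    by (simp add: is_walk_def)
  with z(1) q have "is_walk A (x # q) \<and> hd (x # q) = x \<and> last (x # q) = y \<and> walk_len (x # q) = Suc n"
    by (simp add: is_walk_Cons walk_len_Cons)
  then show ?case ..
qed

lemma relpow_in_V:
  assumes "A \<subseteq> V \<times> V" "x \<in> V" "(x, y) \<in> A ^^ n"
  shows "y \<in> V"
  using assms(3)
proof (induction n arbitrary: y)
  case 0
  then show ?case using assms(2) by simp
next
  case (Suc n)
  obtain z where "(x, z) \<in> A ^^ n" "(z, y) \<in> A"
    using Suc.prems by (rule relpow_Suc_E)
  then show ?case using assms(1) by blast
qed

lemma relpow_exists:
  assumes "A \<subseteq> V \<times> V" "\<forall>y\<in>V. out_nbrs A y \<noteq> {}" "x \<in> V"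
  shows "\<exists>y. (x, y) \<in> A ^^ n"
proof (induction n)
  case (Suc n)
  then obtain y where y: "(x, y) \<in> A ^^ n" by blast
  have "y \<in> V"
    using assms(1,3) y by (rule relpow_in_V)
  then obtain z where "(y, z) \<in> A"
    using assms(2) by (auto simp: out_nbrs_def)
  with y show ?case
    by (blast intro: relpow_Suc_I)
qed simp

definition out_ball :: "('a \<times> 'a) set \<Rightarrow> nat \<Rightarrow> 'a \<Rightarrow> 'a set" where
  "out_ball A n x = {y. \<exists>m\<le>n. (x, y) \<in> A ^^ m}"

lemma out_ball_subset:
  assumes "A \<subseteq> V \<times> V" "x \<in> V"
  shows "out_ball A n x \<subseteq> V"
proof
  fix y assume "y \<in> out_ball A n x"
  then obtain m where "(x, y) \<in> A ^^ m"
    by (auto simp: out_ball_def)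
  then show "y \<in> V"
    by (rule relpow_in_V[OF assms])
qed

lemma out_ballI: "(x, y) \<in> A ^^ m \<Longrightarrow> m \<le> n \<Longrightarrow> y \<in> out_ball A n x"
  by (auto simp: out_ball_def)

lemma in_out_ball_iff_walk:
  "y \<in> out_ball A n x \<longleftrightarrow> (\<exists>p. is_walk A p \<and> hd p = x \<and> last p = y \<and> walk_len p \<le> n)"
proof
  assume "y \<in> out_ball A n x"
  then obtain m where "m \<le> n" "(x, y) \<in> A ^^ m"
    by (auto simp: out_ball_def)
  then show "\<exists>p. is_walk A p \<and> hd p = x \<and> last p = y \<and> walk_len p \<le> n"
    using relpow_imp_walk by fastforce
next
  assume "\<exists>p. is_walk A p \<and> hd p = x \<and> last p = y \<and> walk_len p \<le> n"
  then obtain p where p: "is_walk A p" "hd p = x" "last p = y" "walk_len p \<le> n"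
    by blast
  then have "(x, y) \<in> A ^^ walk_len p"
    using walk_imp_relpow by fastforce
  with p(4) show "y \<in> out_ball A n x"
    by (auto simp: out_ball_def)
qed

lemma outliers_eq: "outliers V A k x = V - out_ball A k x"
  unfolding outliers_def set_diff_eq in_out_ball_iff_walk by simp

definition walks_from :: "('a \<times> 'a) set \<Rightarrow> nat \<Rightarrow> 'a \<Rightarrow> 'a list set" where
  "walks_from A n x = {p. is_walk A p \<and> hd p = x \<and> walk_len p \<le> n}"

lemma out_ball_eq_last_walks_from: "out_ball A n x = last ` walks_from A n x"
  unfolding set_eq_iff in_out_ball_iff_walk by (auto simp: walks_from_def)

lemma walks_from_0: "walks_from A 0 x = {[x]}"
proof -
  have "p \<in> walks_from A 0 x \<longleftrightarrow> p = [x]" for p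
    by (cases p) (auto simp: walks_from_def walk_len_def is_walk_def)
  then show ?thesis by blast
qed

lemma Nil_notin_walks_from: "[] \<notin> walks_from A n x"
  by (simp add: walks_from_def)

lemma Cons_in_walks_from_Suc:
  "x # q \<in> walks_from A (Suc n) x \<longleftrightarrow> q = [] \<or> (x, hd q) \<in> A \<and> q \<in> walks_from A n (hd q)"
  by (cases q) (auto simp: walks_from_def walk_len_def is_walk_Cons)

lemma walks_from_Suc:
  "walks_from A (Suc n) x = insert [x] (\<Union>y\<in>out_nbrs A x. (#) x ` walks_from A n y)"
proof (intro set_eqI iffI)
  fix p assume p: "p \<in> walks_from A (Suc n) x"
  then obtain q where "p = x # q"
    by (cases p) (auto simp: walks_from_def)
  with p show "p \<in> insert [x] (\<Union>y\<in>out_nbrs A x. (#) x ` walks_from A n y)"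
    by (auto simp: Cons_in_walks_from_Suc out_nbrs_def)
next
  fix p assume "p \<in> insert [x] (\<Union>y\<in>out_nbrs A x. (#) x ` walks_from A n y)"
  then consider "p = [x]" | y q where "(x, y) \<in> A" "q \<in> walks_from A n y" "p = x # q"
    by (auto simp: out_nbrs_def)
  then show "p \<in> walks_from A (Suc n) x"
  proof cases
    case 2
    then have "hd q = y"
      by (simp add: walks_from_def)
    with 2 show ?thesis
      by (simp add: Cons_in_walks_from_Suc)
  qed (simp add: Cons_in_walks_from_Suc)
qed

lemma walks_from_disjoint:
  "y \<noteq> z \<Longrightarrow> walks_from A n y \<inter> walks_from A n z = {}"
  by (auto simp: walks_from_def)

lemma Suc_double_sum_power2: "Suc (2 * (\<Sum>i\<le>n. 2 ^ i)) = (\<Sum>i\<le>Suc n. (2::nat) ^ i)"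
  unfolding sum.atMost_Suc_shift by (simp add: sum_distrib_left)

lemma card_walks_from:
  assumes arcs: "A \<subseteq> V \<times> V" and out_deg: "\<forall>y\<in>V. card (out_nbrs A y) = 2" and "x \<in> V"
  shows "card (walks_from A n x) = (\<Sum>i\<le>n. 2 ^ i)"
  using \<open>x \<in> V\<close>
proof (induction n arbitrary: x)
  case 0
  then show ?case by (simp add: walks_from_0)
next
  case (Suc n)
  let ?W = "\<lambda>y. (#) x ` walks_from A n y"
  let ?U = "\<Union>y\<in>out_nbrs A x. ?W y"
  have N: "card (out_nbrs A x) = 2" "finite (out_nbrs A x)" "out_nbrs A x \<subseteq> V"
    using out_deg arcs Suc.prems by (auto simp: out_nbrs_def intro: card_ge_0_finite)
  have card_W: "card (?W y) = (\<Sum>i\<le>n. 2 ^ i)" if "y \<in> out_nbrs A x" for y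
    using Suc.IH N(3) that by (auto simp: card_image)
  then have fin_W: "finite (?W y)" if "y \<in> out_nbrs A x" for y
    using that by (intro card_ge_0_finite) (simp add: sum_pos)
  have disj: "?W y \<inter> ?W z = {}" if "y \<noteq> z" for y z
    using walks_from_disjoint[OF that] by (simp add: image_Int[symmetric])
  have "card ?U = (\<Sum>y\<in>out_nbrs A x. card (?W y))"
    using N(2) fin_W disj by (intro card_UN_disjoint) auto
  also have "\<dots> = 2 * (\<Sum>i\<le>n. 2 ^ i)"
    using N(1) by (simp only: sum.cong[OF refl card_W] sum_constant) simp
  finally have card_U: "card ?U = 2 * (\<Sum>i\<le>n. 2 ^ i)" .
  have "finite ?U"
    using N(2) fin_W by blast
  moreover have "[x] \<notin> ?U"
    by (simp add: image_iff Nil_notin_walks_from)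
  ultimately have "card (walks_from A (Suc n) x) = Suc (card ?U)"
    unfolding walks_from_Suc by (rule card_insert_disjoint)
  also have "\<dots> = (\<Sum>i\<le>Suc n. 2 ^ i)"
    unfolding card_U by (rule Suc_double_sum_power2)
  finally show ?case .
qed

lemma exists_other_out_nbr:
  assumes "card (out_nbrs A y) = 2"
  shows "\<exists>w. (y, w) \<in> A \<and> w \<noteq> z"
proof -
  obtain a b where ab: "out_nbrs A y = {a, b}" "a \<noteq> b"
    using assms by (auto simp: card_2_iff)
  then have "a \<in> out_nbrs A y" "b \<in> out_nbrs A y"
    by simp_all
  then have "(y, a) \<in> A" "(y, b) \<in> A"
    by (simp_all add: out_nbrs_def)
  with ab(2) show ?thesis
    by blast
qed

locale geodetic_digraph =
  fixes V :: "'a set" and A :: "('a \<times> 'a) set" and k :: nat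
  assumes arcs_subset: "A \<subseteq> V \<times> V" and geodetic: "k_geodetic V A k"
begin

lemma walk_unique:
  assumes "is_walk A p" "is_walk A q" "hd p \<in> V" "hd q = hd p" "last q = last p"
    and "walk_len p \<le> k" "walk_len q \<le> k"
  shows "p = q"
proof -
  have "(hd p, last p) \<in> A ^^ walk_len p"
    using assms(1) by (rule walk_imp_relpow)
  then have "last p \<in> V"
    by (rule relpow_in_V[OF arcs_subset assms(3)])
  with geodetic assms(3) have "\<forall>p' q'. is_walk A p' \<and> is_walk A q' \<and> hd p' = hd p \<and> last p' = last p
      \<and> hd q' = hd p \<and> last q' = last p \<and> walk_len p' \<le> k \<and> walk_len q' \<le> k \<longrightarrow> p' = q'"
    unfolding k_geodetic_def by blast
  with assms show ?thesis
    by blast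
qed

lemma relpow_length_unique:
  assumes "x \<in> V" "(x, z) \<in> A ^^ i" "(x, z) \<in> A ^^ j" "i \<le> k" "j \<le> k"
  shows "i = j"
proof -
  obtain p where p: "is_walk A p" "hd p = x" "last p = z" "walk_len p = i"
    using relpow_imp_walk[OF assms(2)] by blast
  obtain q where q: "is_walk A q" "hd q = x" "last q = z" "walk_len q = j"
    using relpow_imp_walk[OF assms(3)] by blast
  have "p = q"
    using walk_unique[OF p(1) q(1)] p q assms(1,4,5) by simp
  with p(4) q(4) show ?thesis
    by simp
qed

lemma relpow_cycle_trivial:
  assumes "x \<in> V" "(x, x) \<in> A ^^ n" "n \<le> k"
  shows "n = 0"
  using relpow_length_unique[OF assms(1,2) relpow_0_I assms(3)] by simp

lemma first_arc_unique:
  assumes "x \<in> V" "(x, y1) \<in> A" "(x, y2) \<in> A" "(y1, z) \<in> A ^^ i" "(y2, z) \<in> A ^^ j"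
    and "i < k" "j < k"
  shows "y1 = y2"
proof -
  obtain p where p: "is_walk A p" "hd p = y1" "last p = z" "walk_len p = i"
    using relpow_imp_walk[OF assms(4)] by blast
  obtain q where q: "is_walk A q" "hd q = y2" "last q = z" "walk_len q = j"
    using relpow_imp_walk[OF assms(5)] by blast
  have "p \<noteq> []" "q \<noteq> []"
    using p(1) q(1) by auto
  then have "x # p = x # q"
    using walk_unique[of "x # p" "x # q"] p q assms by (simp add: is_walk_Cons walk_len_Cons)
  with p(2) q(2) show ?thesis
    by simp
qed

lemma inj_on_last_walks_from:
  assumes "x \<in> V"
  shows "inj_on last (walks_from A k x)"
proof (rule inj_onI)
  fix p q
  assume "p \<in> walks_from A k x" "q \<in> walks_from A k x" "last p = last q"
  then show "p = q"
    using walk_unique[of p q] assms by (simp add: walks_from_def)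
qed

lemma relpow_notin_out_ball:
  assumes "x \<in> V" "(x, z) \<in> A ^^ k" "0 < k"
  shows "z \<notin> out_ball A (k - 1) x"
proof
  assume "z \<in> out_ball A (k - 1) x"
  then obtain m where m: "m \<le> k - 1" "(x, z) \<in> A ^^ m"
    by (auto simp: out_ball_def)
  then have "m = k"
    using relpow_length_unique[OF assms(1) m(2) assms(2)] by simp
  with m(1) assms(3) show False
    by simp
qed

lemma sibling_notin_out_ball:
  assumes out_deg: "\<forall>y\<in>V. card (out_nbrs A y) = 2"
    and "x \<in> V" "0 < k" "0 < n" "(x, z) \<in> A ^^ n"
  shows "\<exists>w. (x, w) \<in> A ^^ n \<and> w \<notin> out_ball A (k - 1) z"
proof -
  obtain n' where n: "n = Suc n'"
    using assms(4) gr0_implies_Suc by blast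
  obtain y where y: "(x, y) \<in> A ^^ n'" "(y, z) \<in> A"
    using assms(5)[unfolded n] by (rule relpow_Suc_E)
  have "y \<in> V"
    using arcs_subset assms(2) y(1) by (rule relpow_in_V)
  then obtain w where w: "(y, w) \<in> A" "w \<noteq> z"
    using out_deg exists_other_out_nbr[of A y z] by blast
  have "w \<notin> out_ball A (k - 1) z"
  proof
    assume "w \<in> out_ball A (k - 1) z"
    then obtain q where q: "q \<le> k - 1" "(z, w) \<in> A ^^ q"
      by (auto simp: out_ball_def)
    have "(y, w) \<in> A ^^ Suc q"
      using y(2) q(2) by (rule relpow_Suc_I2)
    moreover have "(y, w) \<in> A ^^ 1"
      using w(1) by simp
    ultimately have "Suc q = 1"
      by (rule relpow_length_unique[OF \<open>y \<in> V\<close>]) (use q(1) assms(3) in auto)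
    with q(2) w(2) show False
      by simp
  qed
  moreover have "(x, w) \<in> A ^^ n"
    unfolding n using y(1) w(1) by (rule relpow_Suc_I)
  ultimately show ?thesis
    by blast
qed

end

lemma diregular_2k3_geodetic_digraph: "diregular_2k3 V A k \<Longrightarrow> geodetic_digraph V A k"
  by unfold_locales (simp_all add: diregular_2k3_def)

lemma card_outliers:
  assumes G: "diregular_2k3 V A k" and "x \<in> V"
  shows "card (outliers V A k x) = 3"
proof -
  interpret geodetic_digraph V A k
    using G by (rule diregular_2k3_geodetic_digraph)
  have fin: "finite V" and card_V: "card V = (\<Sum>i\<le>k. 2 ^ i) + 3"
    and out_deg: "\<forall>y\<in>V. card (out_nbrs A y) = 2"
    using G by (simp_all add: diregular_2k3_def)
  have ball_V: "out_ball A k x \<subseteq> V"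
    using arcs_subset \<open>x \<in> V\<close> by (rule out_ball_subset)
  have "card (out_ball A k x) = (\<Sum>i\<le>k. 2 ^ i)"
    unfolding out_ball_eq_last_walks_from
    using card_image[OF inj_on_last_walks_from[OF \<open>x \<in> V\<close>]]
      card_walks_from[OF arcs_subset out_deg \<open>x \<in> V\<close>] by simp
  then show ?thesis
    unfolding outliers_eq using card_Diff_subset[OF finite_subset[OF ball_V fin] ball_V] card_V
    by simp
qed

locale shared_out_nbr = geodetic_digraph +
  fixes u v u1 u2 v1 :: 'a
  assumes k_ge_2: "2 \<le> k"
    and u_in_V: "u \<in> V" and v_in_V: "v \<in> V"
    and out_nbrs_u: "out_nbrs A u = {u1, u2}" and out_nbrs_v: "out_nbrs A v = {v1, u2}"
    and u1_neq_u2: "u1 \<noteq> u2" and v1_neq_u2: "v1 \<noteq> u2" and u1_neq_v1: "u1 \<noteq> v1"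
begin

text \<open>The hypotheses are symmetric under exchanging (u, u1) with (v, v1); the facts of
  the mirrored instance are available under the prefix swap in later contexts.\<close>

sublocale swap: shared_out_nbr V A k v u v1 u2 u1
  using arcs_subset geodetic k_ge_2 u_in_V v_in_V out_nbrs_u out_nbrs_v u1_neq_u2 v1_neq_u2 u1_neq_v1
  by unfold_locales auto

lemma arcs_u: "(u, u1) \<in> A" "(u, u2) \<in> A"
proof -
  have "u1 \<in> out_nbrs A u" "u2 \<in> out_nbrs A u"
    using out_nbrs_u by simp_all
  then show "(u, u1) \<in> A" "(u, u2) \<in> A"
    by (simp_all add: out_nbrs_def)
qed

lemma out_arc_u: "(u, y) \<in> A \<Longrightarrow> y = u1 \<or> y = u2"
proof -
  assume "(u, y) \<in> A"
  then have "y \<in> out_nbrs A u"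
    by (simp add: out_nbrs_def)
  then show ?thesis
    using out_nbrs_u by simp
qed

lemma u1_in_V: "u1 \<in> V"
  using arcs_u(1) arcs_subset by blast

lemma u_neq_v: "u \<noteq> v"
proof
  assume "u = v"
  then have "u1 \<in> {v1, u2}"
    using out_nbrs_u out_nbrs_v by simp
  with u1_neq_u2 u1_neq_v1 show False
    by simp
qed

lemma u_notin_out_ball_u1: "u \<notin> out_ball A (k - 1) u1"
proof
  assume "u \<in> out_ball A (k - 1) u1"
  then obtain c where c: "c \<le> k - 1" "(u1, u) \<in> A ^^ c"
    by (auto simp: out_ball_def)
  have "(u, u) \<in> A ^^ Suc c"
    using arcs_u(1) c(2) by (rule relpow_Suc_I2)
  then have "Suc c = 0"
    by (rule relpow_cycle_trivial[OF u_in_V]) (use c(1) k_ge_2 in simp)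
  then show False
    by simp
qed

end

context shared_out_nbr
begin

lemma v1_in_out_ball_u1:
  assumes "v1 \<in> out_ball A k u"
  shows "v1 \<in> out_ball A (k - 1) u1"
proof -
  obtain m where m: "m \<le> k" "(u, v1) \<in> A ^^ m"
    using assms by (auto simp: out_ball_def)
  show ?thesis
  proof (cases m)
    case 0
    then have "(v1, u2) \<in> A ^^ 1"
      using m(2) arcs_u(2) by simp
    then have "v1 = u2"
      by (rule first_arc_unique[OF v_in_V swap.arcs_u _ relpow_0_I]) (use k_ge_2 in simp_all)
    with v1_neq_u2 show ?thesis
      by simp
  next
    case (Suc m')
    obtain y where y: "(u, y) \<in> A" "(y, v1) \<in> A ^^ m'"
      using m(2)[unfolded Suc] by (rule relpow_Suc_E2)
    have "y \<noteq> u2"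
    proof
      assume "y = u2"
      with y(2) have "(u2, v1) \<in> A ^^ m'"
        by simp
      then have "v1 = u2"
        by (rule first_arc_unique[OF v_in_V swap.arcs_u relpow_0_I]) (use k_ge_2 m(1) Suc in simp_all)
      with v1_neq_u2 show False ..
    qed
    then have "y = u1"
      using out_arc_u[OF y(1)] by simp
    with y(2) m(1) Suc show ?thesis
      by (intro out_ballI[of _ _ m']) simp_all
  qed
qed

lemma u_notin_out_ball_v1:
  assumes "u1 \<in> out_ball A (k - 1) v1"
  shows "u \<notin> out_ball A (k - 1) v1"
proof
  assume "u \<in> out_ball A (k - 1) v1"
  then obtain c where c: "c \<le> k - 1" "(v1, u) \<in> A ^^ c"
    by (auto simp: out_ball_def)
  obtain b where b: "b \<le> k - 1" "(v1, u1) \<in> A ^^ b"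
    using assms by (auto simp: out_ball_def)
  have "(v1, u1) \<in> A ^^ Suc c"
    using c(2) arcs_u(1) by (rule relpow_Suc_I)
  then have "Suc c = b"
    by (rule relpow_length_unique[OF swap.u1_in_V _ b(2)]) (use b(1) c(1) k_ge_2 in auto)
  have "(v1, u2) \<in> A ^^ Suc c"
    using c(2) arcs_u(2) by (rule relpow_Suc_I)
  then have "v1 = u2"
    by (rule first_arc_unique[OF v_in_V swap.arcs_u _ relpow_0_I]) (use \<open>Suc c = b\<close> b(1) k_ge_2 in auto)
  with v1_neq_u2 show False ..
qed

end

context shared_out_nbr
begin

lemma u_in_outliers_v:
  assumes "u1 \<in> out_ball A (k - 1) v1"
  shows "u \<in> outliers V A k v"
proof -
  have "u \<notin> out_ball A k v"
  proof
    assume "u \<in> out_ball A k v"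
    then obtain m where m: "m \<le> k" "(v, u) \<in> A ^^ m"
      by (auto simp: out_ball_def)
    show False
    proof (cases m)
      case 0
      with m(2) u_neq_v show False
        by simp
    next
      case (Suc m')
      obtain y where y: "(v, y) \<in> A" "(y, u) \<in> A ^^ m'"
        using m(2)[unfolded Suc] by (rule relpow_Suc_E2)
      from y(1) consider "y = v1" | "y = u2"
        using swap.out_arc_u by blast
      then show False
      proof cases
        case 1
        with y(2) m(1) Suc have "u \<in> out_ball A (k - 1) v1"
          by (intro out_ballI[of _ _ m']) simp_all
        with u_notin_out_ball_v1[OF assms] show False ..
      next
        case 2
        with y(2) have "(u, u) \<in> A ^^ Suc m'"
          using arcs_u(2) by (blast intro: relpow_Suc_I2)
        then have "Suc m' = 0"
          by (rule relpow_cycle_trivial[OF u_in_V]) (use m(1) Suc in simp)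
        then show False
          by simp
      qed
    qed
  qed
  with u_in_V show ?thesis
    by (simp add: outliers_eq)
qed

lemma closer_in_outliers_v:
  assumes "v1 \<in> out_ball A (k - 1) u1"
    and z: "z \<in> out_ball A (k - 1) u1" "z \<notin> out_ball A (k - 1) v1"
  shows "z \<in> outliers V A k v"
proof -
  obtain c where c: "c \<le> k - 1" "(u1, z) \<in> A ^^ c"
    using z(1) by (auto simp: out_ball_def)
  have "z \<in> V"
    using arcs_subset u1_in_V c(2) by (rule relpow_in_V)
  have "z \<notin> out_ball A k v"
  proof
    assume "z \<in> out_ball A k v"
    then obtain m where m: "m \<le> k" "(v, z) \<in> A ^^ m"
      by (auto simp: out_ball_def)
    show False
    proof (cases m)
      case 0
      with m(2) z(1) swap.u_notin_out_ball_v1[OF assms(1)] show False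
        by simp
    next
      case (Suc m')
      obtain y where y: "(v, y) \<in> A" "(y, z) \<in> A ^^ m'"
        using m(2)[unfolded Suc] by (rule relpow_Suc_E2)
      from y(1) consider "y = v1" | "y = u2"
        using swap.out_arc_u by blast
      then show False
      proof cases
        case 1
        with y(2) m(1) Suc z(2) show False
          by (auto simp: out_ball_def)
      next
        case 2
        with y(2) have "u1 = u2"
          using first_arc_unique[OF u_in_V arcs_u c(2)] c(1) m(1) Suc k_ge_2 by simp
        with u1_neq_u2 show False ..
      qed
    qed
  qed
  with \<open>z \<in> V\<close> show ?thesis
    by (simp add: outliers_eq)
qed

lemma three_near_u1_far_from_v1:
  assumes out_deg: "\<forall>y\<in>V. card (out_nbrs A y) = 2"
    and v1_near: "v1 \<in> out_ball A (k - 1) u1" and u1_near: "u1 \<in> out_ball A (k - 1) v1"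
  shows "\<exists>W. W \<subseteq> out_ball A (k - 1) u1 - out_ball A (k - 1) v1 \<and> card W = 3"
proof -
  obtain a where a: "a \<le> k - 1" "(u1, v1) \<in> A ^^ a"
    using v1_near by (auto simp: out_ball_def)
  obtain b where b: "b \<le> k - 1" "(v1, u1) \<in> A ^^ b"
    using u1_near by (auto simp: out_ball_def)
  have "a \<noteq> 0"
    using a(2) u1_neq_v1 by (cases a) auto
  have "b \<noteq> 0"
    using b(2) u1_neq_v1 by (cases b) auto
  have "(u1, u1) \<in> A ^^ (a + b)"
    unfolding relpow_add using a(2) b(2) by blast
  have "k < a + b"
  proof (rule ccontr)
    assume "\<not> k < a + b"
    then have "a + b = 0"
      by (intro relpow_cycle_trivial[OF u1_in_V \<open>(u1, u1) \<in> A ^^ (a + b)\<close>]) simp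
    with \<open>a \<noteq> 0\<close> show False
      by simp
  qed
  have "\<exists>y. (u1, y) \<in> A ^^ a \<and> y \<notin> out_ball A (k - 1) v1"
    by (rule sibling_notin_out_ball[OF out_deg u1_in_V _ _ a(2)]) (use k_ge_2 \<open>a \<noteq> 0\<close> in simp_all)
  then obtain y where y: "(u1, y) \<in> A ^^ a" "y \<notin> out_ball A (k - 1) v1"
    by blast
  have "b < k"
    using b(1) k_ge_2 by simp
  then obtain m where k_eq: "k = Suc (b + m)"
    using less_imp_Suc_add by blast
  have "\<forall>x\<in>V. out_nbrs A x \<noteq> {}"
    using out_deg by auto
  then obtain t where t: "(u1, t) \<in> A ^^ m"
    using relpow_exists[OF arcs_subset _ u1_in_V] by blast
  have "t \<in> V"
    using arcs_subset u1_in_V t by (rule relpow_in_V)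
  then have "card (out_nbrs A t) = 2"
    using out_deg by blast
  then obtain t1 t2 where t12: "out_nbrs A t = {t1, t2}" "t1 \<noteq> t2"
    unfolding card_2_iff by blast
  have far: "s \<in> out_ball A (k - 1) u1 - out_ball A (k - 1) v1 \<and> s \<noteq> y"
    if "s \<in> out_nbrs A t" for s
  proof -
    have "(t, s) \<in> A"
      using that by (simp add: out_nbrs_def)
    with t have s: "(u1, s) \<in> A ^^ Suc m"
      by (rule relpow_Suc_I)
    then have "(v1, s) \<in> A ^^ (b + Suc m)"
      unfolding relpow_add using b(2) by blast
    then have "s \<notin> out_ball A (k - 1) v1"
      using relpow_notin_out_ball[OF swap.u1_in_V] k_eq by simp
    moreover have "s \<in> out_ball A (k - 1) u1"
      using s by (rule out_ballI) (use k_eq \<open>b \<noteq> 0\<close> in simp)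
    moreover have "s \<noteq> y"
    proof
      assume "s = y"
      with y(1) have "(u1, s) \<in> A ^^ a"
        by simp
      with s have "Suc m = a"
        by (rule relpow_length_unique[OF u1_in_V]) (use a(1) k_eq in simp_all)
      with \<open>k < a + b\<close> k_eq show False
        by simp
    qed
    ultimately show ?thesis
      by blast
  qed
  have "t1 \<in> out_nbrs A t" "t2 \<in> out_nbrs A t"
    using t12(1) by simp_all
  note far_t = far[OF this(1)] far[OF this(2)]
  have "y \<in> out_ball A (k - 1) u1"
    using y(1) a(1) by (rule out_ballI)
  with y(2) far_t have "{y, t1, t2} \<subseteq> out_ball A (k - 1) u1 - out_ball A (k - 1) v1"
    by blast
  moreover have "card {y, t1, t2} = 3"
    using far_t t12(2) by auto
  ultimately show ?thesis
    by blast
qed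

end

lemma diregular_2k3_shared_out_nbr:
  assumes "2 \<le> k" "diregular_2k3 V A k" "u \<in> V" "v \<in> V"
    and "out_nbrs A u \<inter> out_nbrs A v = {u2}"
    and "out_nbrs A u = {u1, u2}" "out_nbrs A v = {v1, u2}"
  shows "shared_out_nbr V A k u v u1 u2 v1"
proof -
  have out_deg: "\<forall>x\<in>V. card (out_nbrs A x) = 2"
    using assms(2) by (simp add: diregular_2k3_def)
  have "u1 \<noteq> u2"
  proof
    assume "u1 = u2"
    with assms(6) have "card (out_nbrs A u) = 1"
      by simp
    with out_deg assms(3) show False
      by simp
  qed
  have "v1 \<noteq> u2"
  proof
    assume "v1 = u2"
    with assms(7) have "card (out_nbrs A v) = 1"
      by simp
    with out_deg assms(4) show False
      by simp
  qed
  have "u1 \<noteq> v1"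
  proof
    assume "u1 = v1"
    with assms(6,7) have "u1 \<in> out_nbrs A u \<inter> out_nbrs A v"
      by simp
    with assms(5) \<open>u1 \<noteq> u2\<close> show False
      by simp
  qed
  interpret geodetic_digraph V A k
    using assms(2) by (rule diregular_2k3_geodetic_digraph)
  show ?thesis
    by unfold_locales
      (use assms(1,3,4,6,7) \<open>u1 \<noteq> u2\<close> \<open>v1 \<noteq> u2\<close> \<open>u1 \<noteq> v1\<close> in simp_all)
qed

theorem lemma5:
  fixes V :: "'a set" and A :: "('a \<times> 'a) set" and k :: nat
    and u v u1 u2 v1 :: 'a
  assumes "k \<ge> 3"
    and "diregular_2k3 V A k"
    and "u \<in> V" and "v \<in> V" and "u \<noteq> v"
    and "out_nbrs A u \<inter> out_nbrs A v = {u2}"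
    and "out_nbrs A u = {u1, u2}"
    and "out_nbrs A v = {v1, u2}"
  shows "v1 \<in> outliers V A k u \<or> u1 \<in> outliers V A k v"
proof (rule ccontr)
  assume not_outliers: "\<not> (v1 \<in> outliers V A k u \<or> u1 \<in> outliers V A k v)"
  \<comment> \<open>The argument only needs k >= 2; u \<noteq> v follows from the other hypotheses.\<close>
  interpret shared_out_nbr V A k u v u1 u2 v1
    using assms(1-4,6-8) by (intro diregular_2k3_shared_out_nbr) simp_all
  have out_deg: "\<forall>x\<in>V. card (out_nbrs A x) = 2" and "finite V"
    using assms(2) by (simp_all add: diregular_2k3_def)
  have "v1 \<in> out_ball A k u" "u1 \<in> out_ball A k v"
    using not_outliers swap.u1_in_V u1_in_V by (simp_all add: outliers_eq)
  note near = v1_in_out_ball_u1[OF this(1)] swap.v1_in_out_ball_u1[OF this(2)]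
  obtain W where W: "W \<subseteq> out_ball A (k - 1) u1 - out_ball A (k - 1) v1" "card W = 3"
    using three_near_u1_far_from_v1[OF out_deg near] by blast
  have "insert u W \<subseteq> outliers V A k v"
    using W(1) u_in_outliers_v[OF near(2)] closer_in_outliers_v[OF near(1)] by blast
  then have "card (insert u W) \<le> card (outliers V A k v)"
    by (rule card_mono[rotated]) (simp add: outliers_eq \<open>finite V\<close>)
  moreover have "card (insert u W) = Suc (card W)"
  proof (rule card_insert_disjoint)
    show "finite W"
      using W(2) by (intro card_ge_0_finite) simp
    show "u \<notin> W"
      using W(1) u_notin_out_ball_u1 by blast
  qed
  ultimately show False
    using W(2) card_outliers[OF assms(2,4)] by simp
qed

end
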